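(* Let $p_1,\ldots,p_m\in[0,1]$ and $\alpha\in[0,1]$, and let $q_\alpha$, $\hat\pi_\alpha$, $B_q$ be as in the context. For any $q\in[0,1]$ we have $\alpha\, q_\alpha(B_q)\le \hat\pi_\alpha q$, with equality if and only if $\hat\pi_\alpha q=0$ (equivalently $h_\alpha q=0$).
   Context: Setting: $m$ hypotheses with $p$-values $p_1,\ldots,p_m\in[0,1]$; $r_1,\ldots,r_m$ a permutation of $1,\ldots,m$ with $p_{r_1}\le\cdots\le p_{r_m}$, $p_{(i)}=p_{r_i}$, $L_i=\{r_1,\ldots,r_i\}$, $K_i=\{r_{m-i+1},\ldots,r_m\}$. For $I\subseteq\{1,\ldots,m\}$, $p_{(i:I)}$ is the $i$-th smallest of $\{p_j:j\in I\}$. Simes local test: $I\in\mathcal{U}_\alpha$ iff some $1\le i\le|I|$ has $|I|p_{(i:I)}\le i\alpha$. Closed testing: $\mathcal{X}_\alpha=\{I: J\in\mathcal{U}_\alpha\ \forall J\supseteq I\}$. $t_\alpha(S)=\max\{|I|:I\subseteq S, I\notin\mathcal{X}_\alpha\}$, and $q_\alpha(S)=t_\alpha(S)/|S|$ for $S\neq\emptyset$, $q_\alpha(\emptyset)=0$. $h_\alpha=\max\{0\le i\le m:K_i\notin\mathcal{U}_\alpha\}$, $\hat\pi_\alpha=h_\alpha/m$. For $q\in[0,1]$: $b_q=\max\{1\le i\le m: mp_{(i)}\le iq\}$ ($b_q=0$ if none), $B_q=L_{b_q}$ (the Benjamini–Hochberg rejection set at level $q$). *)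

theory Defs
  imports Complex_Main
begin

text \<open>Hypotheses are indexed by {1..m}; p-values are p :: nat => real.
  The sorting permutation r is a parameter (assumed to be a bijection of {1..m}
  sorting the p-values increasingly).\<close>

text \<open>i-th smallest (1-based, with multiplicity) of the p-values indexed by I.\<close>
definition pI :: "(nat \<Rightarrow> real) \<Rightarrow> nat set \<Rightarrow> nat \<Rightarrow> real" where
  "pI p I i = sort (map p (sorted_list_of_set I)) ! (i - 1)"

definition simes_U :: "(nat \<Rightarrow> real) \<Rightarrow> real \<Rightarrow> nat set \<Rightarrow> bool" where
  "simes_U p \<alpha> I \<longleftrightarrow> (\<exists>i\<in>{1..card I}. real (card I) * pI p I i \<le> real i * \<alpha>)"

definition closed_X :: "nat \<Rightarrow> (nat \<Rightarrow> real) \<Rightarrow> real \<Rightarrow> nat set \<Rightarrow> bool" where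
  "closed_X m p \<alpha> I \<longleftrightarrow> (\<forall>J. I \<subseteq> J \<and> J \<subseteq> {1..m} \<longrightarrow> simes_U p \<alpha> J)"

definition t_alpha :: "nat \<Rightarrow> (nat \<Rightarrow> real) \<Rightarrow> real \<Rightarrow> nat set \<Rightarrow> nat" where
  "t_alpha m p \<alpha> S = Max {card I | I. I \<subseteq> S \<and> \<not> closed_X m p \<alpha> I}"

definition q_alpha :: "nat \<Rightarrow> (nat \<Rightarrow> real) \<Rightarrow> real \<Rightarrow> nat set \<Rightarrow> real" where
  "q_alpha m p \<alpha> S = (if S = {} then 0 else real (t_alpha m p \<alpha> S) / real (card S))"

definition Lset :: "(nat \<Rightarrow> nat) \<Rightarrow> nat \<Rightarrow> nat set" where
  "Lset r i = r ` {1..i}"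

definition Kset :: "nat \<Rightarrow> (nat \<Rightarrow> nat) \<Rightarrow> nat \<Rightarrow> nat set" where
  "Kset m r i = r ` {m - i + 1..m}"

definition h_alpha :: "nat \<Rightarrow> (nat \<Rightarrow> real) \<Rightarrow> (nat \<Rightarrow> nat) \<Rightarrow> real \<Rightarrow> nat" where
  "h_alpha m p r \<alpha> = Max {i. i \<le> m \<and> \<not> simes_U p \<alpha> (Kset m r i)}"

definition pi_hat :: "nat \<Rightarrow> (nat \<Rightarrow> real) \<Rightarrow> (nat \<Rightarrow> nat) \<Rightarrow> real \<Rightarrow> real" where
  "pi_hat m p r \<alpha> = real (h_alpha m p r \<alpha>) / real m"

definition b_q :: "nat \<Rightarrow> (nat \<Rightarrow> real) \<Rightarrow> (nat \<Rightarrow> nat) \<Rightarrow> real \<Rightarrow> nat" where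
  "b_q m p r q = (if \<exists>i\<in>{1..m}. real m * p (r i) \<le> real i * q
                  then Max {i\<in>{1..m}. real m * p (r i) \<le> real i * q} else 0)"

definition BH :: "nat \<Rightarrow> (nat \<Rightarrow> real) \<Rightarrow> (nat \<Rightarrow> nat) \<Rightarrow> real \<Rightarrow> nat set" where
  "BH m p r q = Lset r (b_q m p r q)"

end

theory Submission
  imports Defs "HOL-Library.Multiset"
begin

text \<open>
  If I is a non-empty subset of the BH rejection set B_q that is not rejected by closed
  testing, some J \<supseteq> I is not Simes-rejected. Among all sets of size |J| the set K_|J| of
  the largest p-values is the hardest to reject, so K_|J| is not rejected either and
  |J| \<le> h_\<alpha>. Every p-value in I is at most b_q q/m, hence so is the |I|-th smallest
  p-value of J, and non-rejection of J gives
  |I| \<alpha> < |J| b_q q/m \<le> h_\<alpha> b_q q/m. Taking |I| = t_\<alpha>(B_q) and dividing by |B_q| = b_q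
  yields \<alpha> q_\<alpha>(B_q) < \<pi>_\<alpha> q whenever t_\<alpha>(B_q) > 0; otherwise the left side is 0.
\<close>

lemma sorted_nth_le_iff_less_length_filter:
  fixes xs :: "'a::linorder list"
  assumes "sorted xs" "i < length xs"
  shows "xs ! i \<le> x \<longleftrightarrow> i < length (filter (\<lambda>y. y \<le> x) xs)"
proof -
  let ?N = "{n. n < length xs \<and> xs ! n \<le> x}"
  have "xs ! i \<le> x \<longleftrightarrow> {0..i} \<subseteq> ?N"
    using assms sorted_nth_mono[OF assms(1)] by (auto intro: order_trans[rotated])
  also have "\<dots> \<longleftrightarrow> i < card ?N"
  proof
    assume "{0..i} \<subseteq> ?N"
    then show "i < card ?N" using card_mono[of ?N "{0..i}"] by auto
  next
    assume card: "i < card ?N"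
    show "{0..i} \<subseteq> ?N"
    proof (rule ccontr)
      assume "\<not> {0..i} \<subseteq> ?N"
      then obtain n where "n \<in> {0..i}" "n \<notin> ?N" by blast
      then have "n \<le> i" "\<not> xs ! n \<le> x" using assms(2) by auto
      have "?N \<subseteq> {0..<n}"
      proof
        fix k assume k: "k \<in> ?N"
        have "\<not> n \<le> k"
          using k \<open>\<not> xs ! n \<le> x\<close> sorted_nth_mono[OF assms(1), of n k] by auto
        then show "k \<in> {0..<n}" by simp
      qed
      then show False using card card_mono[of "{0..<n}" ?N] \<open>n \<le> i\<close> by auto
    qed
  qed
  finally show ?thesis by (simp add: length_filter_conv_card)
qed

lemma pI_le_iff_le_card:
  assumes "finite J" "1 \<le> i" "i \<le> card J"
  shows "pI p J i \<le> x \<longleftrightarrow> i \<le> card {j\<in>J. p j \<le> x}"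
proof -
  define ys where "ys = map p (sorted_list_of_set J)"
  have "length (filter (\<lambda>y. y \<le> x) (sort ys)) = length (filter (\<lambda>y. y \<le> x) ys)"
    by (metis mset_filter mset_sort size_mset)
  also have "\<dots> = card {j\<in>J. p j \<le> x}"
    unfolding ys_def using assms(1)
    by (simp add: filter_map o_def distinct_length_filter Int_def conj_commute)
  finally show ?thesis
    using sorted_nth_le_iff_less_length_filter[of "sort ys" "i - 1" x] assms
    by (simp add: pI_def ys_def, linarith)
qed

lemma card_le_card_filter_of_card_eq:
  assumes "finite J" "finite K" "card J = card K" "A \<subseteq> K"
    and "\<forall>j\<in>A. P j" "\<forall>j\<in>J - K. P j"
  shows "card A \<le> card {j\<in>J. P j}"
proof -
  have "card (K - J) = card (J - K)"
    using assms(1-3) card_Int_Diff[of J K] card_Int_Diff[of K J] by (simp add: Int_commute)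
  have "card A \<le> card (A \<inter> J) + card (K - J)"
    using assms(2,4) card_Int_Diff[of A J] card_mono[of "K - J" "A - J"]
    by (fastforce intro: finite_subset)
  also have "\<dots> = card ((A \<inter> J) \<union> (J - K))"
    using assms(1,4) \<open>card (K - J) = card (J - K)\<close> by (subst card_Un_disjoint) auto
  also have "\<dots> \<le> card {j\<in>J. P j}"
    using assms(1,5,6) by (intro card_mono) auto
  finally show ?thesis .
qed

lemma
  assumes "bij_betw r {1..m} {1..m}" "k \<le> m"
  shows card_Kset: "card (Kset m r k) = k"
    and Kset_subset: "Kset m r k \<subseteq> {1..m}"
proof -
  have "{m - k + 1..m} \<subseteq> {1..m}" using assms(2) by auto
  then show "card (Kset m r k) = k" "Kset m r k \<subseteq> {1..m}"
    using assms bij_betw_subset[OF assms(1)] unfolding Kset_def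
    by (auto simp: bij_betw_def card_image dest: inj_on_subset)
qed

lemma p_le_of_notin_Kset:
  assumes "bij_betw r {1..m} {1..m}"
    and "\<forall>i j. 1 \<le> i \<and> i \<le> j \<and> j \<le> m \<longrightarrow> p (r i) \<le> p (r j)"
    and "j \<in> {1..m} - Kset m r k" "j' \<in> Kset m r k"
  shows "p j \<le> p j'"
proof -
  obtain a where "a \<in> {1..m}" "j = r a"
    using assms(3) bij_betw_imp_surj_on[OF assms(1)] by (metis DiffD1 imageE)
  moreover obtain b where "b \<in> {m - k + 1..m}" "j' = r b"
    using assms(4) unfolding Kset_def by auto
  moreover have "a \<notin> {m - k + 1..m}" using assms(3) \<open>j = r a\<close> unfolding Kset_def by auto
  ultimately show ?thesis using assms(2) by auto
qed

lemma card_filter_Kset_le: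
  fixes p :: "nat \<Rightarrow> 'a::preorder"
  assumes "bij_betw r {1..m} {1..m}"
    and "\<forall>i j. 1 \<le> i \<and> i \<le> j \<and> j \<le> m \<longrightarrow> p (r i) \<le> p (r j)"
    and "J \<subseteq> {1..m}"
  shows "card {j\<in>Kset m r (card J). p j \<le> x} \<le> card {j\<in>J. p j \<le> x}"
proof (cases "\<exists>j0\<in>Kset m r (card J). p j0 \<le> x")
  case True
  then obtain j0 where j0: "j0 \<in> Kset m r (card J)" "p j0 \<le> x" by blast
  have "card J \<le> m" using card_mono[OF _ assms(3)] by simp
  note K = card_Kset[OF assms(1) this] Kset_subset[OF assms(1) this]
  have "p j \<le> x" if "j \<in> J - Kset m r (card J)" for j
  proof -
    have "p j \<le> p j0" using that assms(3) p_le_of_notin_Kset[OF assms(1,2) _ j0(1)] by blast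
    then show ?thesis using j0(2) by (rule order_trans)
  qed
  then show ?thesis
    using K assms(3) finite_subset[OF K(2)] finite_subset[OF assms(3)]
    by (intro card_le_card_filter_of_card_eq[where K = "Kset m r (card J)"]) auto
next
  case False
  then have "{j\<in>Kset m r (card J). p j \<le> x} = {}" by blast
  then show ?thesis by (metis card.empty zero_le)
qed

lemma simes_U_iff_le_card:
  assumes "finite I"
  shows "simes_U p \<alpha> I \<longleftrightarrow>
    (\<exists>i\<in>{1..card I}. i \<le> card {j\<in>I. p j \<le> real i * \<alpha> / real (card I)})"
proof -
  have "real (card I) * pI p I i \<le> real i * \<alpha> \<longleftrightarrow>
      i \<le> card {j\<in>I. p j \<le> real i * \<alpha> / real (card I)}" if "i \<in> {1..card I}" for i
  proof -
    have "real (card I) > 0" using that by auto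
    then have "real (card I) * pI p I i \<le> real i * \<alpha> \<longleftrightarrow>
        pI p I i \<le> real i * \<alpha> / real (card I)"
      by (simp add: pos_le_divide_eq mult.commute)
    then show ?thesis using that pI_le_iff_le_card[OF assms] by simp
  qed
  then show ?thesis unfolding simes_U_def by auto
qed

lemma simes_U_of_simes_U_Kset:
  assumes "bij_betw r {1..m} {1..m}"
    and "\<forall>i j. 1 \<le> i \<and> i \<le> j \<and> j \<le> m \<longrightarrow> p (r i) \<le> p (r j)"
    and "J \<subseteq> {1..m}" "simes_U p \<alpha> (Kset m r (card J))"
  shows "simes_U p \<alpha> J"
proof -
  define K where "K = Kset m r (card J)"
  have "card J \<le> m" using card_mono[OF _ assms(3)] by simp
  then have K: "finite K" "card K = card J"
    unfolding K_def using card_Kset[OF assms(1)] Kset_subset[OF assms(1)] by (auto intro: finite_subset)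
  then obtain i where "i \<in> {1..card J}" "i \<le> card {j\<in>K. p j \<le> real i * \<alpha> / real (card J)}"
    using assms(4) unfolding K_def[symmetric] simes_U_iff_le_card[OF K(1)] by auto
  moreover note card_filter_Kset_le[OF assms(1-3), of "real i * \<alpha> / real (card J)", folded K_def]
  ultimately have "i \<le> card {j\<in>J. p j \<le> real i * \<alpha> / real (card J)}" by linarith
  then show ?thesis
    using \<open>i \<in> {1..card J}\<close> finite_subset[OF assms(3)] by (auto simp: simes_U_iff_le_card)
qed

lemma not_simes_U_empty: "\<not> simes_U p \<alpha> {}"
  by (simp add: simes_U_def)

lemma
  shows h_alpha_le: "h_alpha m p r \<alpha> \<le> m"
    and le_h_alpha: "k \<le> m \<Longrightarrow> \<not> simes_U p \<alpha> (Kset m r k) \<Longrightarrow> k \<le> h_alpha m p r \<alpha>"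
proof -
  let ?H = "{i. i \<le> m \<and> \<not> simes_U p \<alpha> (Kset m r i)}"
  have "finite ?H" by (rule finite_subset[of _ "{..m}"]) auto
  moreover have "0 \<in> ?H" using not_simes_U_empty by (simp add: Kset_def)
  ultimately show "h_alpha m p r \<alpha> \<le> m"
    unfolding h_alpha_def using Max_in by blast
  show "k \<le> m \<Longrightarrow> \<not> simes_U p \<alpha> (Kset m r k) \<Longrightarrow> k \<le> h_alpha m p r \<alpha>"
    unfolding h_alpha_def using \<open>finite ?H\<close> by (intro Max_ge) auto
qed

lemma card_le_h_alpha:
  assumes "bij_betw r {1..m} {1..m}"
    and "\<forall>i j. 1 \<le> i \<and> i \<le> j \<and> j \<le> m \<longrightarrow> p (r i) \<le> p (r j)"
    and "J \<subseteq> {1..m}" "\<not> simes_U p \<alpha> J"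
  shows "card J \<le> h_alpha m p r \<alpha>"
  using assms simes_U_of_simes_U_Kset[OF assms(1-3)] card_mono[OF _ assms(3)]
  by (intro le_h_alpha) auto

lemma b_q_mem:
  assumes "b_q m p r q \<noteq> 0"
  shows "b_q m p r q \<in> {i\<in>{1..m}. real m * p (r i) \<le> real i * q}"
proof -
  let ?S = "{i\<in>{1..m}. real m * p (r i) \<le> real i * q}"
  have "?S \<noteq> {}" using assms unfolding b_q_def by (auto split: if_splits)
  then have "Max ?S \<in> ?S" by (intro Max_in) auto
  then show ?thesis using \<open>?S \<noteq> {}\<close> unfolding b_q_def by auto
qed

lemma card_BH:
  assumes "bij_betw r {1..m} {1..m}"
  shows "card (BH m p r q) = b_q m p r q"
proof (cases "b_q m p r q = 0")
  case False
  then have "{1..b_q m p r q} \<subseteq> {1..m}" using b_q_mem by fastforce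
  then have "inj_on r {1..b_q m p r q}"
    using bij_betw_imp_inj_on[OF assms] by (rule inj_on_subset[rotated])
  then show ?thesis by (simp add: BH_def Lset_def card_image)
qed (simp add: BH_def Lset_def)

lemma p_le_of_mem_BH:
  assumes "\<forall>i j. 1 \<le> i \<and> i \<le> j \<and> j \<le> m \<longrightarrow> p (r i) \<le> p (r j)"
    and "j \<in> BH m p r q"
  shows "p j \<le> real (b_q m p r q) * q / real m"
proof -
  define b where "b = b_q m p r q"
  obtain a where a: "a \<in> {1..b}" "j = r a" using assms(2) by (auto simp: BH_def Lset_def b_def)
  then have b: "b \<in> {i\<in>{1..m}. real m * p (r i) \<le> real i * q}"
    using b_q_mem[of m p r q] by (auto simp: b_def)
  then have "p (r a) \<le> p (r b)" using assms(1) a by auto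
  also have "\<dots> \<le> real b * q / real m" using b by (auto simp: pos_le_divide_eq mult.commute)
  finally show ?thesis using a by (simp add: b_def)
qed

lemma card_mult_alpha_less_of_not_closed_X:
  assumes "bij_betw r {1..m} {1..m}"
    and "\<forall>i j. 1 \<le> i \<and> i \<le> j \<and> j \<le> m \<longrightarrow> p (r i) \<le> p (r j)"
    and "0 \<le> q" "I \<subseteq> BH m p r q" "\<not> closed_X m p \<alpha> I" "I \<noteq> {}"
  shows "real (card I) * \<alpha> < real (h_alpha m p r \<alpha>) * (real (b_q m p r q) * q / real m)"
proof -
  define x where "x = real (b_q m p r q) * q / real m"
  obtain J where J: "I \<subseteq> J" "J \<subseteq> {1..m}" "\<not> simes_U p \<alpha> J"
    using assms(5) unfolding closed_X_def by auto
  have "finite J" using J(2) finite_subset by blast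
  have "finite I" using J(1) \<open>finite J\<close> by (rule finite_subset)
  then have I: "1 \<le> card I" "card I \<le> card J"
    using assms(6) card_mono[OF \<open>finite J\<close> J(1)] by (auto simp: Suc_le_eq card_gt_0_iff)
  have I_le_x: "I \<subseteq> {j\<in>J. p j \<le> x}"
    using J(1) assms(4) p_le_of_mem_BH[where p = p and r = r, OF assms(2)] unfolding x_def by blast
  then have "pI p J (card I) \<le> x"
    using pI_le_iff_le_card[OF \<open>finite J\<close> I] card_mono[OF _ I_le_x] \<open>finite J\<close> by auto
  have "real (card I) * \<alpha> < real (card J) * pI p J (card I)"
    using J(3) I unfolding simes_U_def by (auto simp: not_le)
  also have "\<dots> \<le> real (card J) * x"
    using \<open>pI p J (card I) \<le> x\<close> by (rule mult_left_mono) simp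
  also have "\<dots> \<le> real (h_alpha m p r \<alpha>) * x"
    using card_le_h_alpha[OF assms(1,2) J(2,3)] assms(3) unfolding x_def
    by (intro mult_right_mono) auto
  finally show ?thesis unfolding x_def .
qed

lemma t_alpha_attained:
  assumes "finite S"
  obtains I where "I \<subseteq> S" "\<not> closed_X m p \<alpha> I" "card I = t_alpha m p \<alpha> S"
proof -
  let ?T = "{card I | I. I \<subseteq> S \<and> \<not> closed_X m p \<alpha> I}"
  have "finite ?T" using assms by simp
  moreover have "\<not> closed_X m p \<alpha> {}"
    unfolding closed_X_def using not_simes_U_empty by blast
  then have "0 \<in> ?T" by (metis (mono_tags, lifting) card.empty empty_subsetI mem_Collect_eq)
  ultimately have "t_alpha m p \<alpha> S \<in> ?T" unfolding t_alpha_def using Max_in by blast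
  then show ?thesis using that by auto
qed

lemma alpha_q_alpha_BH_less:
  assumes "bij_betw r {1..m} {1..m}"
    and "\<forall>i j. 1 \<le> i \<and> i \<le> j \<and> j \<le> m \<longrightarrow> p (r i) \<le> p (r j)"
    and "0 \<le> q" "t_alpha m p \<alpha> (BH m p r q) \<noteq> 0"
  shows "\<alpha> * q_alpha m p \<alpha> (BH m p r q) < pi_hat m p r \<alpha> * q"
proof -
  define b where "b = b_q m p r q"
  define t where "t = t_alpha m p \<alpha> (BH m p r q)"
  obtain I where I: "I \<subseteq> BH m p r q" "\<not> closed_X m p \<alpha> I" "card I = t"
    using t_alpha_attained[of "BH m p r q"] unfolding t_def BH_def Lset_def by blast
  then have "I \<noteq> {}" using assms(4) t_def by auto
  then have "b > 0" using I(1) unfolding b_def BH_def Lset_def by auto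
  have "real t * \<alpha> < real (h_alpha m p r \<alpha>) * (real b * q / real m)"
    using card_mult_alpha_less_of_not_closed_X[OF assms(1-3) I(1,2) \<open>I \<noteq> {}\<close>] I(3)
    unfolding b_def by simp
  then have "\<alpha> * (real t / real b) < real (h_alpha m p r \<alpha>) / real m * q"
    using \<open>b > 0\<close> by (simp add: field_simps)
  moreover have "q_alpha m p \<alpha> (BH m p r q) = real t / real b"
    using I(1) \<open>I \<noteq> {}\<close> card_BH[OF assms(1)] by (auto simp: q_alpha_def t_def b_def)
  ultimately show ?thesis by (simp add: pi_hat_def)
qed

theorem lemma5:
  fixes m :: nat and p :: "nat \<Rightarrow> real" and r :: "nat \<Rightarrow> nat" and \<alpha> q :: real
  assumes p01: "\<forall>j\<in>{1..m}. 0 \<le> p j \<and> p j \<le> 1"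
    and r_bij: "bij_betw r {1..m} {1..m}"
    and r_sorted: "\<forall>i j. 1 \<le> i \<and> i \<le> j \<and> j \<le> m \<longrightarrow> p (r i) \<le> p (r j)"
    and \<alpha>01: "0 \<le> \<alpha>" "\<alpha> \<le> 1"
    and q01: "0 \<le> q" "q \<le> 1"
  shows "\<alpha> * q_alpha m p \<alpha> (BH m p r q) \<le> pi_hat m p r \<alpha> * q
    \<and> (\<alpha> * q_alpha m p \<alpha> (BH m p r q) = pi_hat m p r \<alpha> * q \<longleftrightarrow> pi_hat m p r \<alpha> * q = 0)
    \<and> (pi_hat m p r \<alpha> * q = 0 \<longleftrightarrow> real (h_alpha m p r \<alpha>) * q = 0)"
proof -
  let ?lhs = "\<alpha> * q_alpha m p \<alpha> (BH m p r q)" and ?rhs = "pi_hat m p r \<alpha> * q"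
  have "0 \<le> ?lhs" using \<alpha>01(1) by (simp add: q_alpha_def)
  moreover have "0 \<le> ?rhs" using q01(1) by (simp add: pi_hat_def)
  moreover have "?lhs = 0 \<or> ?lhs < ?rhs"
    using alpha_q_alpha_BH_less[OF r_bij r_sorted q01(1)] by (fastforce simp: q_alpha_def)
  moreover have "?rhs = 0 \<longleftrightarrow> real (h_alpha m p r \<alpha>) * q = 0"
    using h_alpha_le[of m p r \<alpha>] by (auto simp: pi_hat_def)
  ultimately show ?thesis by linarith
qed

end
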